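(* Let $\mathcal{A}$ and $\mathcal{U}$ be Banach algebras, $\theta$ a nonzero character on $\mathcal{A}$, $\mathcal{X}$ a simple Banach $(\mathcal{A}\times_{\theta}\mathcal{U})$-bimodule, and $D:\mathcal{A}\times_{\theta}\mathcal{U}\to\mathcal{X}$ a derivation. Then $D$ is continuous if either of the following holds: (i) $\mathrm{ann}_{\mathcal{X}}\mathcal{U}\neq\mathcal{X}$ and $Z_{\mathcal{X}}(\mathcal{A})\neq\mathcal{X}$; (ii) $\mathrm{ann}_{\mathcal{X}}\mathcal{U}=\{0\}$ and $Z_{\mathcal{X}}(\mathcal{A})\neq\mathcal{X}$.
   Context: The Lau product $\mathcal{A}\times_{\theta}\mathcal{U}$ is $\mathcal{A}\times\mathcal{U}$ with norm $\|(a,u)\|=\|a\|+\|u\|$ and product $(a,u)(a',u')=(aa',\theta(a)u'+\theta(a')u+uu')$. $\mathcal{X}$ is an $\mathcal{A}$-bimodule via $ax=(a,0)x$, $xa=x(a,0)$ and a $\mathcal{U}$-bimodule via $ux=(0,u)x$, $xu=x(0,u)$. Simple means the only closed $(\mathcal{A}\times_{\theta}\mathcal{U})$-subbimodules of $\mathcal{X}$ are $\{0\}$ and $\mathcal{X}$. $\mathrm{ann}_{\mathcal{X}}\mathcal{U}=\{x: ux=xu=0\ \forall u\in\mathcal{U}\}$; $Z_{\mathcal{X}}(\mathcal{A})=\{x: ax=xa\ \forall a\in\mathcal{A}\}$. *)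

theory Defs
  imports "HOL-Analysis.Analysis"
begin

text \<open>HOL has no complex vector spaces, so we add a complex scalar multiplication
  extending the real one.\<close>

class complex_normed_space = real_normed_vector +
  fixes scaleC :: "complex \<Rightarrow> 'a \<Rightarrow> 'a" (infixr "*\<^sub>C" 75)
  assumes scaleC_add_right: "c *\<^sub>C (x + y) = c *\<^sub>C x + c *\<^sub>C y"
    and scaleC_add_left: "(c + d) *\<^sub>C x = c *\<^sub>C x + d *\<^sub>C x"
    and scaleC_scaleC: "c *\<^sub>C (d *\<^sub>C x) = (c * d) *\<^sub>C x"
    and scaleC_one: "1 *\<^sub>C x = x"
    and scaleC_of_real: "complex_of_real r *\<^sub>C x = r *\<^sub>R x"
    and norm_scaleC: "norm (c *\<^sub>C x) = cmod c * norm x"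

class complex_banach = complex_normed_space + banach

class complex_banach_algebra = complex_banach + real_normed_algebra +
  assumes scaleC_mult_left: "(c *\<^sub>C x) * y = c *\<^sub>C (x * y)"
    and scaleC_mult_right: "x * (c *\<^sub>C y) = c *\<^sub>C (x * y)"

definition character :: "('a::complex_banach_algebra \<Rightarrow> complex) \<Rightarrow> bool" where
  "character \<theta> \<longleftrightarrow>
     (\<forall>a b. \<theta> (a + b) = \<theta> a + \<theta> b) \<and>
     (\<forall>c a. \<theta> (c *\<^sub>C a) = c * \<theta> a) \<and>
     (\<forall>a b. \<theta> (a * b) = \<theta> a * \<theta> b)"

definition lau_mult ::
  "('a::complex_banach_algebra \<Rightarrow> complex) \<Rightarrow> 'a \<times> 'u::complex_banach_algebra \<Rightarrow> 'a \<times> 'u \<Rightarrow> 'a \<times> 'u" where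
  "lau_mult \<theta> p q = (fst p * fst q,
      \<theta> (fst p) *\<^sub>C snd q + \<theta> (fst q) *\<^sub>C snd p + snd p * snd q)"

definition lau_norm :: "'a::real_normed_vector \<times> 'u::real_normed_vector \<Rightarrow> real" where
  "lau_norm p = norm (fst p) + norm (snd p)"

definition lau_scale :: "complex \<Rightarrow> 'a::complex_normed_space \<times> 'u::complex_normed_space \<Rightarrow> 'a \<times> 'u" where
  "lau_scale c p = (c *\<^sub>C fst p, c *\<^sub>C snd p)"

text \<open>\<open>L p x\<close> is the left action \<open>p\<cdot>x\<close>, \<open>R x p\<close> the right action \<open>x\<cdot>p\<close>.\<close>
definition lau_banach_bimodule ::
  "('a::complex_banach_algebra \<Rightarrow> complex) \<Rightarrow> ('a \<times> 'u::complex_banach_algebra \<Rightarrow> 'x::complex_banach \<Rightarrow> 'x)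
   \<Rightarrow> ('x \<Rightarrow> 'a \<times> 'u \<Rightarrow> 'x) \<Rightarrow> bool" where
  "lau_banach_bimodule \<theta> L R \<longleftrightarrow>
     (\<forall>p q x. L (p + q) x = L p x + L q x) \<and>
     (\<forall>p x y. L p (x + y) = L p x + L p y) \<and>
     (\<forall>c p x. L (lau_scale c p) x = c *\<^sub>C L p x) \<and>
     (\<forall>c p x. L p (c *\<^sub>C x) = c *\<^sub>C L p x) \<and>
     (\<forall>p q x. R x (p + q) = R x p + R x q) \<and>
     (\<forall>p x y. R (x + y) p = R x p + R y p) \<and>
     (\<forall>c p x. R x (lau_scale c p) = c *\<^sub>C R x p) \<and>
     (\<forall>c p x. R (c *\<^sub>C x) p = c *\<^sub>C R x p) \<and>
     (\<forall>p q x. L (lau_mult \<theta> p q) x = L p (L q x)) \<and>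
     (\<forall>p q x. R x (lau_mult \<theta> p q) = R (R x p) q) \<and>
     (\<forall>p q x. R (L p x) q = L p (R x q)) \<and>
     (\<exists>K. \<forall>p x. norm (L p x) \<le> K * lau_norm p * norm x \<and>
                norm (R x p) \<le> K * lau_norm p * norm x)"

definition closed_subbimodule ::
  "('a \<times> 'u \<Rightarrow> 'x::complex_banach \<Rightarrow> 'x) \<Rightarrow> ('x \<Rightarrow> 'a \<times> 'u \<Rightarrow> 'x) \<Rightarrow> 'x set \<Rightarrow> bool" where
  "closed_subbimodule L R M \<longleftrightarrow> closed M \<and> 0 \<in> M \<and>
     (\<forall>x\<in>M. \<forall>y\<in>M. x + y \<in> M) \<and> (\<forall>c. \<forall>x\<in>M. c *\<^sub>C x \<in> M) \<and>
     (\<forall>p. \<forall>x\<in>M. L p x \<in> M \<and> R x p \<in> M)"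

definition simple_bimodule ::
  "('a \<times> 'u \<Rightarrow> 'x::complex_banach \<Rightarrow> 'x) \<Rightarrow> ('x \<Rightarrow> 'a \<times> 'u \<Rightarrow> 'x) \<Rightarrow> bool" where
  "simple_bimodule L R \<longleftrightarrow>
     (\<forall>M. closed_subbimodule L R M \<longrightarrow> M = {0} \<or> M = UNIV)"

text \<open>\<open>ann\<^sub>X U\<close>, with \<open>u x = (0,u) x\<close>, \<open>x u = x (0,u)\<close>.\<close>
definition ann_U :: "('a::zero \<times> 'u \<Rightarrow> 'x::zero \<Rightarrow> 'x) \<Rightarrow> ('x \<Rightarrow> 'a \<times> 'u \<Rightarrow> 'x) \<Rightarrow> 'x set" where
  "ann_U L R = {x. \<forall>u. L (0, u) x = 0 \<and> R x (0, u) = 0}"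

text \<open>\<open>Z\<^sub>X(A)\<close>, with \<open>a x = (a,0) x\<close>, \<open>x a = x (a,0)\<close>.\<close>
definition center_A :: "('a \<times> 'u::zero \<Rightarrow> 'x \<Rightarrow> 'x) \<Rightarrow> ('x \<Rightarrow> 'a \<times> 'u \<Rightarrow> 'x) \<Rightarrow> 'x set" where
  "center_A L R = {x. \<forall>a. L (a, 0) x = R x (a, 0)}"

definition lau_derivation ::
  "('a::complex_banach_algebra \<Rightarrow> complex) \<Rightarrow> ('a \<times> 'u::complex_banach_algebra \<Rightarrow> 'x::complex_banach \<Rightarrow> 'x)
   \<Rightarrow> ('x \<Rightarrow> 'a \<times> 'u \<Rightarrow> 'x) \<Rightarrow> ('a \<times> 'u \<Rightarrow> 'x) \<Rightarrow> bool" where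
  "lau_derivation \<theta> L R D \<longleftrightarrow>
     (\<forall>p q. D (p + q) = D p + D q) \<and>
     (\<forall>c p. D (lau_scale c p) = c *\<^sub>C D p) \<and>
     (\<forall>p q. D (lau_mult \<theta> p q) = R (D p) q + L p (D q))"

end

theory Submission
  imports Defs
begin

(* Write A_0 = ker theta.  The annihilator of U and the set N (sandwich_ann) of x with
   U (x A_0) = 0 = (A_0 x) U are closed sub-bimodules, so by simplicity each is {0} or X, and
   ann_X U = {0} because it is not X.  Since (0,u) p (a,0) = 0 = (a,0) p (0,u) for a in A_0, the
   Leibniz rule writes u (D(p) a) and (a D(p)) u as bounded linear functions of p; hence the
   separating space of D lies in N.  If N = {0}, D has closed graph and is continuous by the
   closed graph theorem.  If N = X, simplicity applied to the left and right annihilators of U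
   shows that A_0 acts trivially on both sides.  Then E = (e,0) with theta e = 1 acts on each
   side as 0 or as the identity, and Z_X(A) <> X rules out equal actions; so one side of the
   action vanishes and D q equals q D(E) or D(E) q, which is bounded in q. *)

declare scaleC_one [simp]

lemma scaleC_zero_right [simp]: "c *\<^sub>C (0::'a::complex_normed_space) = 0"
  by (metis add_cancel_right_right scaleC_add_right)

lemma scaleC_zero_left [simp]: "(0::complex) *\<^sub>C (x::'a::complex_normed_space) = 0"
  by (metis scaleC_of_real of_real_0 scaleR_zero_left)

section \<open>The closed graph theorem\<close>

lemma sublevel_closure_has_interior:
  fixes T :: "'v::banach \<Rightarrow> 'w::real_normed_vector"
  shows "\<exists>n::nat. interior (closure {x. norm (T x) \<le> n}) \<noteq> {}"
proof (rule ccontr)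
  define F where "F n = closure {x. norm (T x) \<le> real n}" for n
  assume "\<not> ?thesis"
  then have "euclidean interior_of \<Union>(range F) = {}"
    by (intro Baire_category_alt) (auto simp: F_def completely_metrizable_space_euclidean)
  moreover have "x \<in> F (nat \<lceil>norm (T x)\<rceil>)" for x
    unfolding F_def by (rule closure_subset[THEN subsetD]) (simp add: real_nat_ceiling_ge)
  then have "\<Union>(range F) = UNIV" by blast
  ultimately show False by simp
qed

lemma linear_sublevel_ball_approx:
  fixes T :: "'v::real_normed_vector \<Rightarrow> 'w::real_normed_vector"
  assumes "linear T" and ball: "ball x0 r \<subseteq> closure {x. norm (T x) \<le> c}"
    and "norm h < r" and "e > 0"
  shows "\<exists>y. norm (T y) \<le> 2 * c \<and> norm (h - y) < e"
proof -
  have "0 < r" using \<open>norm h < r\<close> by (metis norm_ge_zero le_less_trans)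
  then have "x0 + h \<in> ball x0 r" "x0 \<in> ball x0 r"
    using \<open>norm h < r\<close> by (simp_all add: dist_norm)
  then have "x0 + h \<in> closure {x. norm (T x) \<le> c}" "x0 \<in> closure {x. norm (T x) \<le> c}"
    using ball by blast+
  moreover have "e/2 > 0" using \<open>e > 0\<close> by simp
  ultimately obtain a b where "norm (T a) \<le> c" "dist a (x0 + h) < e/2" "norm (T b) \<le> c" "dist b x0 < e/2"
    unfolding closure_approachable by blast
  have bound: "norm (T (a - b)) \<le> 2 * c"
    using \<open>norm (T a) \<le> c\<close> \<open>norm (T b) \<le> c\<close> norm_triangle_ineq4[of "T a" "T b"]
    by (simp add: linear_diff[OF \<open>linear T\<close>])
  have "norm (h - (a - b)) = norm ((x0 + h - a) - (x0 - b))"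
    by (simp add: algebra_simps)
  also have "\<dots> \<le> dist (x0 + h) a + dist x0 b"
    unfolding dist_norm by (rule norm_triangle_ineq4)
  finally have "norm (h - (a - b)) < e"
    using \<open>dist a (x0 + h) < e/2\<close> \<open>dist b x0 < e/2\<close> by (simp add: dist_commute)
  with bound show ?thesis by blast
qed

lemma linear_approx_preimage:
  fixes T :: "'v::banach \<Rightarrow> 'w::real_normed_vector"
  assumes "linear T"
  obtains M where "M > 0" "\<And>h. \<exists>y. norm (T y) \<le> M * norm h \<and> norm (h - y) \<le> norm h / 2"
proof -
  obtain n :: nat and x0 r where "r > 0" and ball: "ball x0 r \<subseteq> closure {x. norm (T x) \<le> n}"
    using sublevel_closure_has_interior[of T] by (meson all_not_in_conv interior_subset mem_interior)
  define M where "M = 4 * real n / r + 1"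
  have "M > 0" using \<open>r > 0\<close> by (simp add: M_def add_nonneg_pos)
  moreover have "\<exists>y. norm (T y) \<le> M * norm h \<and> norm (h - y) \<le> norm h / 2" for h
  proof (cases "h = 0")
    case True
    then show ?thesis by (intro exI[of _ 0]) (simp add: linear_0[OF \<open>linear T\<close>])
  next
    case False
    define s where "s = r / (2 * norm h)"
    have "s > 0" and "norm (s *\<^sub>R h) < r" and "s * (norm h / 2) > 0"
      using \<open>r > 0\<close> False by (simp_all add: s_def)
    then obtain y' where y': "norm (T y') \<le> 2 * real n" "norm (s *\<^sub>R h - y') < s * (norm h / 2)"
      using linear_sublevel_ball_approx[OF \<open>linear T\<close> ball] by blast
    have "norm (T ((1/s) *\<^sub>R y')) = norm (T y') / s"
      using \<open>s > 0\<close> by (simp add: linear_scale[OF \<open>linear T\<close>])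
    also have "\<dots> \<le> 2 * real n / s" using y'(1) \<open>s > 0\<close> by (simp add: divide_right_mono)
    also have "\<dots> \<le> M * norm h" using \<open>r > 0\<close> False by (simp add: s_def M_def algebra_simps)
    finally have "norm (T ((1/s) *\<^sub>R y')) \<le> M * norm h" .
    moreover have "s *\<^sub>R h - y' = s *\<^sub>R (h - (1/s) *\<^sub>R y')" using \<open>s > 0\<close> by (simp add: scaleR_diff_right)
    then have "norm (h - (1/s) *\<^sub>R y') \<le> norm h / 2" using y'(2) \<open>s > 0\<close> by simp
    ultimately show ?thesis by blast
  qed
  ultimately show ?thesis using that by blast
qed

lemma norm_halving_iterate:
  assumes "\<And>h. norm (h - f h) \<le> norm h / 2"
  shows "norm (((\<lambda>x. x - f x) ^^ k) h) \<le> norm h * (1/2) ^ k"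
proof (induction k)
  case (Suc k)
  have "norm (((\<lambda>x. x - f x) ^^ Suc k) h) \<le> norm (((\<lambda>x. x - f x) ^^ k) h) / 2"
    using assms by simp
  with Suc show ?case by simp
qed simp

lemma linear_norm_bound_of_approx_preimage:
  fixes T :: "'v::banach \<Rightarrow> 'w::banach"
  assumes lin: "linear T"
    and closed_graph: "\<And>q z. q \<longlonglongrightarrow> 0 \<Longrightarrow> (\<lambda>k. T (q k)) \<longlonglongrightarrow> z \<Longrightarrow> z = 0"
    and "M \<ge> 0"
    and approx: "\<And>h. norm (T (f h)) \<le> M * norm h" "\<And>h. norm (h - f h) \<le> norm h / 2"
  shows "norm (T h) \<le> 2 * M * norm h"
proof -
  define res where "res k = ((\<lambda>x. x - f x) ^^ k) h" for k
  define g where "g j = M * norm h * (1/2::real) ^ j" for j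
  have res_bound: "norm (res k) \<le> norm h * (1/2) ^ k" for k
    unfolding res_def by (rule norm_halving_iterate[OF approx(2)])
  have partial_sums: "(\<Sum>j<k. T (f (res j))) = T h - T (res k)" for k
    by (induction k) (simp_all add: res_def linear_diff[OF lin] linear_0[OF lin])
  have norm_le: "norm (T (f (res j))) \<le> g j" for j
    using approx(1)[of "res j"] mult_left_mono[OF res_bound[of j] \<open>M \<ge> 0\<close>]
    by (simp add: g_def mult.assoc)
  have "g sums (2 * M * norm h)"
    unfolding g_def using sums_mult[OF geometric_sums[of "1/2::real"], of "M * norm h"] by (simp add: algebra_simps)
  have summable: "summable (\<lambda>j. norm (T (f (res j))))"
    by (rule summable_comparison_test'[OF sums_summable[OF \<open>g sums _\<close>]]) (simp add: norm_le)
  have "res \<longlonglongrightarrow> 0"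
    by (rule Lim_null_comparison[OF always_eventually[OF allI[OF res_bound]]])
      (intro tendsto_mult_right_zero LIMSEQ_power_zero, simp)
  moreover have "(\<lambda>k. T h - (\<Sum>j<k. T (f (res j)))) \<longlonglongrightarrow> T h - (\<Sum>j. T (f (res j)))"
    by (intro tendsto_diff tendsto_const summable_LIMSEQ summable_norm_cancel[OF summable])
  then have "(\<lambda>k. T (res k)) \<longlonglongrightarrow> T h - (\<Sum>j. T (f (res j)))" by (simp add: partial_sums)
  ultimately have "T h - (\<Sum>j. T (f (res j))) = 0" by (rule closed_graph)
  then have "T h = (\<Sum>j. T (f (res j)))" by simp
  also have "norm \<dots> \<le> (\<Sum>j. norm (T (f (res j))))" by (rule summable_norm[OF summable])
  also have "\<dots> \<le> 2 * M * norm h"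
    using suminf_le[OF norm_le summable sums_summable[OF \<open>g sums _\<close>]] sums_unique[OF \<open>g sums _\<close>] by simp
  finally show ?thesis .
qed

theorem closed_graph_theorem:
  fixes T :: "'v::banach \<Rightarrow> 'w::banach"
  assumes "linear T"
    and closed_graph: "\<And>q z. q \<longlonglongrightarrow> 0 \<Longrightarrow> (\<lambda>k. T (q k)) \<longlonglongrightarrow> z \<Longrightarrow> z = 0"
  shows "bounded_linear T"
proof -
  obtain M where "M > 0" and "\<And>h. \<exists>y. norm (T y) \<le> M * norm h \<and> norm (h - y) \<le> norm h / 2"
    using linear_approx_preimage[OF \<open>linear T\<close>] by blast
  then obtain f where "\<And>h. norm (T (f h)) \<le> M * norm h" "\<And>h. norm (h - f h) \<le> norm h / 2"
    by metis
  then have "norm (T h) \<le> norm h * (2 * M)" for h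
    using linear_norm_bound_of_approx_preimage[OF \<open>linear T\<close> closed_graph, where M=M and f=f and h=h] \<open>M > 0\<close>
    by (simp add: mult.commute)
  with \<open>linear T\<close> show ?thesis
    by (intro bounded_linear_intro[of _ "2 * M"]) (simp_all add: linear_add linear_scale)
qed

lemma graph_limit_in_kernel:
  assumes "bounded_linear T" and "bounded_linear H" and "\<And>p. T (D p) = H p"
    and "q \<longlonglongrightarrow> 0" and "(\<lambda>k. D (q k)) \<longlonglongrightarrow> z"
  shows "T z = 0"
proof -
  have "(\<lambda>k. T (D (q k))) \<longlonglongrightarrow> T z" by (rule bounded_linear.tendsto[OF assms(1,5)])
  moreover have "(\<lambda>k. T (D (q k))) \<longlonglongrightarrow> 0"
    unfolding assms(3) by (rule bounded_linear.tendsto_zero[OF assms(2,4)])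
  ultimately show ?thesis by (rule LIMSEQ_unique)
qed

section \<open>Bimodules over the Lau product\<close>

lemma character_add: "character \<theta> \<Longrightarrow> \<theta> (a + b) = \<theta> a + \<theta> b"
  by (simp add: character_def)

lemma character_mult: "character \<theta> \<Longrightarrow> \<theta> (a * b) = \<theta> a * \<theta> b"
  by (simp add: character_def)

lemma character_scaleC: "character \<theta> \<Longrightarrow> \<theta> (c *\<^sub>C a) = c * \<theta> a"
  by (simp add: character_def)

lemma character_zero: "character \<theta> \<Longrightarrow> \<theta> 0 = 0"
  using character_add[of \<theta> 0 0] by simp

lemma character_diff: "character \<theta> \<Longrightarrow> \<theta> (a - b) = \<theta> a - \<theta> b"
  by (metis add_diff_cancel_right' character_add diff_add_cancel)

lemma character_obtain_one:
  assumes "character \<theta>" and "\<theta> \<noteq> (\<lambda>_. 0)"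
  obtains e where "\<theta> e = 1"
proof -
  obtain a where "\<theta> a \<noteq> 0" using assms(2) by blast
  then show ?thesis using that[of "(1 / \<theta> a) *\<^sub>C a"] by (simp add: character_scaleC[OF assms(1)])
qed

lemma lau_mult_Pair [simp]:
  "lau_mult \<theta> (a, u) (b, v) = (a * b, \<theta> a *\<^sub>C v + \<theta> b *\<^sub>C u + u * v)"
  by (simp add: lau_mult_def)

lemma lau_scale_of_real: "lau_scale (complex_of_real r) p = r *\<^sub>R p"
  by (simp add: lau_scale_def scaleC_of_real prod_eq_iff)

lemma lau_norm_le: "lau_norm p \<le> 2 * norm p"
  using norm_fst_le[of "fst p" "snd p"] norm_snd_le[of "snd p" "fst p"] by (simp add: lau_norm_def)

definition left_ann_U :: "('a::zero \<times> 'u \<Rightarrow> 'x::zero \<Rightarrow> 'x) \<Rightarrow> 'x set" where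
  "left_ann_U L = {x. \<forall>u. L (0, u) x = 0}"

definition right_ann_U :: "('x::zero \<Rightarrow> 'a::zero \<times> 'u \<Rightarrow> 'x) \<Rightarrow> 'x set" where
  "right_ann_U R = {x. \<forall>u. R x (0, u) = 0}"

lemma ann_U_eq_Int: "ann_U L R = left_ann_U L \<inter> right_ann_U R"
  by (auto simp: ann_U_def left_ann_U_def right_ann_U_def)

definition sandwich_ann ::
  "('a::zero \<Rightarrow> 'c::zero) \<Rightarrow> ('a \<times> 'u::zero \<Rightarrow> 'x::zero \<Rightarrow> 'x) \<Rightarrow> ('x \<Rightarrow> 'a \<times> 'u \<Rightarrow> 'x) \<Rightarrow> 'x set" where
  "sandwich_ann \<theta> L R =
     {x. \<forall>u a. \<theta> a = 0 \<longrightarrow> L (0, u) (R x (a, 0)) = 0 \<and> R (L (a, 0) x) (0, u) = 0}"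

lemma closed_subbimodule_intro:
  assumes "closed M" "0 \<in> M" "\<And>x y. x \<in> M \<Longrightarrow> y \<in> M \<Longrightarrow> x + y \<in> M"
    "\<And>c x. x \<in> M \<Longrightarrow> c *\<^sub>C x \<in> M"
    "\<And>p x. x \<in> M \<Longrightarrow> L p x \<in> M" "\<And>p x. x \<in> M \<Longrightarrow> R x p \<in> M"
  shows "closed_subbimodule L R M"
  using assms unfolding closed_subbimodule_def by blast

lemma closed_subbimodule_Int:
  "closed_subbimodule L R M \<Longrightarrow> closed_subbimodule L R N \<Longrightarrow> closed_subbimodule L R (M \<inter> N)"
  unfolding closed_subbimodule_def by (auto intro: closed_Int)

lemma simple_bimoduleD:
  "simple_bimodule L R \<Longrightarrow> closed_subbimodule L R M \<Longrightarrow> M = {0} \<or> M = UNIV"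
  by (simp add: simple_bimodule_def)

locale lau_bimodule =
  fixes \<theta> :: "'a::complex_banach_algebra \<Rightarrow> complex"
    and L :: "'a \<times> 'u::complex_banach_algebra \<Rightarrow> 'x::complex_banach \<Rightarrow> 'x"
    and R :: "'x \<Rightarrow> 'a \<times> 'u \<Rightarrow> 'x"
  assumes character: "character \<theta>" and bimodule: "lau_banach_bimodule \<theta> L R"
begin

lemmas theta_simps [simp] = character_add[OF character] character_diff[OF character]
  character_mult[OF character] character_scaleC[OF character] character_zero[OF character]

lemma
  shows L_add_left: "L (p + q) x = L p x + L q x"
    and L_add_right: "L p (x + y) = L p x + L p y"
    and L_scaleC_left: "L (lau_scale c p) x = c *\<^sub>C L p x"
    and L_scaleC_right: "L p (c *\<^sub>C x) = c *\<^sub>C L p x"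
    and R_add_right: "R x (p + q) = R x p + R x q"
    and R_add_left: "R (x + y) p = R x p + R y p"
    and R_scaleC_right: "R x (lau_scale c p) = c *\<^sub>C R x p"
    and R_scaleC_left: "R (c *\<^sub>C x) p = c *\<^sub>C R x p"
    and L_mult: "L (lau_mult \<theta> p q) x = L p (L q x)"
    and R_mult: "R x (lau_mult \<theta> p q) = R (R x p) q"
    and L_R_assoc: "R (L p x) q = L p (R x q)"
  using bimodule[unfolded lau_banach_bimodule_def] by - (elim conjE, (drule spec)+, assumption)+

lemma action_bound:
  "\<exists>K. \<forall>p x. norm (L p x) \<le> norm p * norm x * K \<and> norm (R x p) \<le> norm p * norm x * K"
proof -
  obtain K where K: "\<And>p x. norm (L p x) \<le> K * lau_norm p * norm x \<and> norm (R x p) \<le> K * lau_norm p * norm x"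
    using bimodule[unfolded lau_banach_bimodule_def] by (elim conjE) blast
  have bound: "K * lau_norm p * norm x \<le> norm p * norm x * (2 * \<bar>K\<bar>)" for p :: "'a \<times> 'u" and x :: 'x
  proof -
    have "K * lau_norm p \<le> \<bar>K\<bar> * lau_norm p"
      by (rule mult_right_mono) (simp_all add: lau_norm_def)
    also have "\<dots> \<le> \<bar>K\<bar> * (2 * norm p)"
      by (rule mult_left_mono[OF lau_norm_le]) simp
    finally have "K * lau_norm p * norm x \<le> \<bar>K\<bar> * (2 * norm p) * norm x"
      by (rule mult_right_mono) simp
    then show ?thesis by (simp only: ac_simps)
  qed
  show ?thesis
    using K bound by (intro exI[of _ "2 * \<bar>K\<bar>"] allI conjI) (meson order_trans)+
qed

lemma
  shows L_scaleR_left: "L (r *\<^sub>R p) x = r *\<^sub>R L p x"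
    and L_scaleR_right: "L p (r *\<^sub>R x) = r *\<^sub>R L p x"
    and R_scaleR_right: "R x (r *\<^sub>R p) = r *\<^sub>R R x p"
    and R_scaleR_left: "R (r *\<^sub>R x) p = r *\<^sub>R R x p"
  using L_scaleC_left[of "complex_of_real r" p x] L_scaleC_right[of p "complex_of_real r" x]
    R_scaleC_right[of x "complex_of_real r" p] R_scaleC_left[of "complex_of_real r" x p]
  by (simp_all only: lau_scale_of_real scaleC_of_real)

sublocale L: bounded_bilinear L
proof (rule bounded_bilinear.intro)
  show "\<exists>K. \<forall>p x. norm (L p x) \<le> norm p * norm x * K"
    using action_bound by (rule ex_forward) simp
qed (fact L_add_left L_add_right L_scaleR_left L_scaleR_right)+

sublocale R: bounded_bilinear R
proof (rule bounded_bilinear.intro)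
  show "\<exists>K. \<forall>x p. norm (R x p) \<le> norm x * norm p * K"
    using action_bound by (rule ex_forward) (simp add: ac_simps)
qed (fact R_add_left R_add_right R_scaleR_left R_scaleR_right)+

declare L.zero_left [simp] L.zero_right [simp] R.zero_left [simp] R.zero_right [simp]

lemma L_zero_Pair [simp]: "L (0, 0) x = 0"
  using L.zero_left by (simp add: zero_prod_def)

lemma R_zero_Pair [simp]: "R x (0, 0) = 0"
  using R.zero_right by (simp add: zero_prod_def)

lemma continuous_on_L: "continuous_on UNIV (L p)"
  by (rule linear_continuous_on[OF L.bounded_linear_right])

lemma continuous_on_R: "continuous_on UNIV (\<lambda>x. R x p)"
  by (rule linear_continuous_on[OF R.bounded_linear_left])

lemma lau_mult_zero_Pair_left: "lau_mult \<theta> (0, u) p = (0, \<theta> (fst p) *\<^sub>C u + u * snd p)"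
  by (cases p) simp

lemma lau_mult_zero_Pair_right: "lau_mult \<theta> p (0, u) = (0, \<theta> (fst p) *\<^sub>C u + snd p * u)"
  by (cases p) simp

lemma closed_subbimodule_left_ann_U: "closed_subbimodule L R (left_ann_U L)"
proof (rule closed_subbimodule_intro)
  show "closed (left_ann_U L)" unfolding left_ann_U_def
    by (intro closed_Collect_all closed_Collect_eq continuous_on_L continuous_on_const)
qed (simp_all add: left_ann_U_def L.add_right L_scaleC_right L_R_assoc[symmetric]
      L_mult[symmetric] lau_mult_zero_Pair_left)

lemma closed_subbimodule_right_ann_U: "closed_subbimodule L R (right_ann_U R)"
proof (rule closed_subbimodule_intro)
  show "closed (right_ann_U R)" unfolding right_ann_U_def
    by (intro closed_Collect_all closed_Collect_eq continuous_on_R continuous_on_const)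
qed (simp_all add: right_ann_U_def R.add_left R_scaleC_left L_R_assoc
      R_mult[symmetric] lau_mult_zero_Pair_right)

lemma closed_subbimodule_ann_U: "closed_subbimodule L R (ann_U L R)"
  unfolding ann_U_eq_Int
  by (intro closed_subbimodule_Int closed_subbimodule_left_ann_U closed_subbimodule_right_ann_U)

lemma closed_subbimodule_sandwich_ann: "closed_subbimodule L R (sandwich_ann \<theta> L R)"
proof (rule closed_subbimodule_intro)
  show "closed (sandwich_ann \<theta> L R)" unfolding sandwich_ann_def
  proof (intro closed_Collect_all closed_Collect_imp closed_Collect_conj closed_Collect_eq continuous_on_const)
    show "open {x. \<theta> a = 0}" for a by (cases "\<theta> a = 0") auto
    show "continuous_on UNIV (\<lambda>x. L (0, u) (R x (a, 0)))" for u a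
      by (intro linear_continuous_on bounded_linear_compose[OF L.bounded_linear_right R.bounded_linear_left])
    show "continuous_on UNIV (\<lambda>x. R (L (a, 0) x) (0, u))" for u a
      by (intro linear_continuous_on bounded_linear_compose[OF R.bounded_linear_left L.bounded_linear_right])
  qed
  show "L p x \<in> sandwich_ann \<theta> L R" if "x \<in> sandwich_ann \<theta> L R" for p x
  proof -
    obtain b v where p: "p = (b, v)" by fastforce
    have "L (0, u) (R (L p x) (a, 0)) = L (lau_mult \<theta> (0, u) p) (R x (a, 0))"
      and "R (L (a, 0) (L p x)) (0, u) = R (L (a * b, 0) x) (0, u)" if "\<theta> a = 0" for u a
      using that by (simp_all add: L_R_assoc p flip: L_mult)
    with that show ?thesis by (simp add: sandwich_ann_def lau_mult_zero_Pair_left)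
  qed
  show "R x p \<in> sandwich_ann \<theta> L R" if "x \<in> sandwich_ann \<theta> L R" for p x
  proof -
    obtain b v where p: "p = (b, v)" by fastforce
    have "L (0, u) (R (R x p) (a, 0)) = L (0, u) (R x (b * a, 0))"
      and "R (L (a, 0) (R x p)) (0, u) = R (L (a, 0) x) (lau_mult \<theta> p (0, u))" if "\<theta> a = 0" for u a
      using that by (simp_all add: p flip: R_mult L_R_assoc)
    with that show ?thesis by (simp add: sandwich_ann_def lau_mult_zero_Pair_right)
  qed
qed (simp_all add: sandwich_ann_def L.add_right R.add_left L_scaleC_right R_scaleC_left)

lemma kernel_acts_trivially:
  assumes "simple_bimodule L R" and "ann_U L R \<noteq> UNIV" and "sandwich_ann \<theta> L R = UNIV"
    and "\<theta> a = 0"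
  shows "L (a, 0) x = 0 \<and> R x (a, 0) = 0"
proof -
  have sandwich: "L (0, u) (R y (a, 0)) = 0" "R (L (a, 0) y) (0, u) = 0" for y u
    using assms(3,4) unfolding sandwich_ann_def by blast+
  consider "left_ann_U L = {0}" | "right_ann_U R = {0}"
    using simple_bimoduleD[OF assms(1) closed_subbimodule_left_ann_U]
      simple_bimoduleD[OF assms(1) closed_subbimodule_right_ann_U] assms(2)
    by (auto simp: ann_U_eq_Int)
  then show ?thesis
  proof cases
    case 1
    have "R x (a, 0) \<in> left_ann_U L" "L (a, 0) x \<in> left_ann_U L"
      using sandwich assms(4) by (simp_all add: left_ann_U_def flip: L_mult)
    with 1 show ?thesis by simp
  next
    case 2
    have "L (a, 0) x \<in> right_ann_U R" "R x (a, 0) \<in> right_ann_U R"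
      using sandwich assms(4) by (simp_all add: right_ann_U_def flip: R_mult)
    with 2 show ?thesis by simp
  qed
qed

lemma closed_subbimodule_L_fixed:
  assumes "\<And>p x. L (lau_mult \<theta> E p) x = L (lau_mult \<theta> p E) x"
  shows "closed_subbimodule L R {x. L E x = x}"
proof (rule closed_subbimodule_intro)
  show "closed {x. L E x = x}" by (intro closed_Collect_eq continuous_on_L continuous_on_id)
  show "L p x \<in> {x. L E x = x}" if "x \<in> {x. L E x = x}" for p x
    using that assms[of p x] L_mult[of p E x] L_mult[of E p x] by simp
qed (simp_all add: L.add_right L_scaleC_right flip: L_R_assoc)

lemma closed_subbimodule_R_fixed:
  assumes "\<And>p x. R x (lau_mult \<theta> E p) = R x (lau_mult \<theta> p E)"
  shows "closed_subbimodule L R {x. R x E = x}"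
proof (rule closed_subbimodule_intro)
  show "closed {x. R x E = x}" by (intro closed_Collect_eq continuous_on_R continuous_on_id)
  show "R x p \<in> {x. R x E = x}" if "x \<in> {x. R x E = x}" for p x
    using that assms[of x p] R_mult[of x p E] R_mult[of x E p] by simp
qed (simp_all add: R.add_left R_scaleC_left L_R_assoc)

context
  fixes e :: 'a
  assumes kernel_trivial: "\<And>a x. \<theta> a = 0 \<Longrightarrow> L (a, 0) x = 0 \<and> R x (a, 0) = 0"
    and unit: "\<theta> e = 1"
begin

lemma
  shows L_Pair_zero_eq: "L (a, 0) x = \<theta> a *\<^sub>C L (e, 0) x"
    and R_Pair_zero_eq: "R x (a, 0) = \<theta> a *\<^sub>C R x (e, 0)"
proof -
  have decomp: "(a, 0) = (a - \<theta> a *\<^sub>C e, 0) + lau_scale (\<theta> a) (e, 0::'u)"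
    by (simp add: lau_scale_def)
  have ker: "L (a - \<theta> a *\<^sub>C e, 0) x = 0 \<and> R x (a - \<theta> a *\<^sub>C e, 0) = 0"
    by (rule kernel_trivial) (simp add: unit)
  show "L (a, 0) x = \<theta> a *\<^sub>C L (e, 0) x"
    using arg_cong[OF decomp, of "\<lambda>p. L p x"] ker by (simp only: L.add_left L_scaleC_left) simp
  show "R x (a, 0) = \<theta> a *\<^sub>C R x (e, 0)"
    using arg_cong[OF decomp, of "R x"] ker by (simp only: R.add_right R_scaleC_right) simp
qed

lemma unit_action_cases:
  assumes "simple_bimodule L R"
  shows "(\<forall>x. L (e, 0) x = 0) \<or> (\<forall>x. L (e, 0) x = x)"
    and "(\<forall>x. R x (e, 0) = 0) \<or> (\<forall>x. R x (e, 0) = x)"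
proof -
  \<comment> \<open>\<open>(e,0)\<close> is an idempotent, central modulo the kernel of \<open>\<theta>\<close>\<close>
  have central: "lau_mult \<theta> (e, 0) p = (e * fst p - fst p * e, 0) + lau_mult \<theta> p (e, 0)" for p
    by (cases p) (simp add: unit)
  have "L (lau_mult \<theta> (e, 0) p) x = L (lau_mult \<theta> p (e, 0)) x"
    and "R x (lau_mult \<theta> (e, 0) p) = R x (lau_mult \<theta> p (e, 0))" for p x
    using kernel_trivial[of "e * fst p - fst p * e"] by (simp_all add: central L.add_left R.add_right unit)
  then have fixed: "closed_subbimodule L R {x. L (e, 0) x = x}" "closed_subbimodule L R {x. R x (e, 0) = x}"
    by (intro closed_subbimodule_L_fixed closed_subbimodule_R_fixed, blast)+
  have "L (e, 0) (L (e, 0) x) = L (e * e - e, 0) x + L (e, 0) x"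
    and "R (R x (e, 0)) (e, 0) = R x (e * e - e, 0) + R x (e, 0)" for x
    by (simp_all flip: L_mult R_mult L.add_left R.add_right)
  then have "L (e, 0) (L (e, 0) x) = L (e, 0) x" "R (R x (e, 0)) (e, 0) = R x (e, 0)" for x
    using kernel_trivial[of "e * e - e"] by (simp_all add: unit)
  then show "(\<forall>x. L (e, 0) x = 0) \<or> (\<forall>x. L (e, 0) x = x)" "(\<forall>x. R x (e, 0) = 0) \<or> (\<forall>x. R x (e, 0) = x)"
    using simple_bimoduleD[OF assms fixed(1)] simple_bimoduleD[OF assms fixed(2)] by blast+
qed

lemma one_sided_action:
  assumes "simple_bimodule L R" and "center_A L R \<noteq> UNIV"
  shows "(\<forall>x p. R x p = 0) \<or> (\<forall>p x. L p x = 0)"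
proof -
  obtain x1 a1 where "L (a1, 0) x1 \<noteq> R x1 (a1, 0)"
    using assms(2) unfolding center_A_def by blast
  then have "L (e, 0) x1 \<noteq> R x1 (e, 0)"
    by (auto simp: L_Pair_zero_eq[of a1] R_Pair_zero_eq[of _ a1])
  then consider "\<forall>x. L (e, 0) x = x \<and> R x (e, 0) = 0" | "\<forall>x. L (e, 0) x = 0 \<and> R x (e, 0) = x"
    using unit_action_cases[OF assms(1)] by force
  then show ?thesis
  proof cases
    case 1
    have "R x p = 0" for x p
    proof -
      obtain b v where "p = (b, v)" by fastforce
      then have "p = (b, 0) + lau_mult \<theta> (e, 0) (0, v)" by (simp add: unit)
      then have "R x p = R x (b, 0) + R (R x (e, 0)) (0, v)"
        by (simp only: R.add_right R_mult)
      with 1 show ?thesis by (simp add: R_Pair_zero_eq[of x b])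
    qed
    then show ?thesis by blast
  next
    case 2
    have "L p x = 0" for x p
    proof -
      obtain b v where "p = (b, v)" by fastforce
      then have "p = (b, 0) + lau_mult \<theta> (0, v) (e, 0)" by (simp add: unit)
      then have "L p x = L (b, 0) x + L (0, v) (L (e, 0) x)"
        by (simp only: L.add_left L_mult)
      with 2 show ?thesis by (simp add: L_Pair_zero_eq[of b])
    qed
    then show ?thesis by blast
  qed
qed

end

end

section \<open>Derivations\<close>

locale lau_bimodule_derivation = lau_bimodule \<theta> L R
  for \<theta> :: "'a::complex_banach_algebra \<Rightarrow> complex"
    and L :: "'a \<times> 'u::complex_banach_algebra \<Rightarrow> 'x::complex_banach \<Rightarrow> 'x"
    and R :: "'x \<Rightarrow> 'a \<times> 'u \<Rightarrow> 'x" +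
  fixes D :: "'a \<times> 'u \<Rightarrow> 'x"
  assumes derivation: "lau_derivation \<theta> L R D"
begin

lemma
  shows D_add: "D (p + q) = D p + D q"
    and D_scaleC: "D (lau_scale c p) = c *\<^sub>C D p"
    and D_mult: "D (lau_mult \<theta> p q) = R (D p) q + L p (D q)"
  using derivation[unfolded lau_derivation_def] by - (elim conjE, (drule spec)+, assumption)+

lemma linear_D: "linear D"
proof (rule linearI)
  show "D (p + q) = D p + D q" for p q by (rule D_add)
  show "D (r *\<^sub>R p) = r *\<^sub>R D p" for r p
    using D_scaleC[of "complex_of_real r" p] by (simp only: lau_scale_of_real scaleC_of_real)
qed

lemma D_zero_Pair [simp]: "D (0, 0) = 0"
  using linear_0[OF linear_D] by (simp add: zero_prod_def)

lemma D_sandwich_left: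
  assumes "\<theta> a = 0"
  shows "L (0, u) (R (D p) (a, 0)) = - R (R (D (0, u)) p) (a, 0) - L (0, u) (L p (D (a, 0)))"
proof -
  have "lau_mult \<theta> (lau_mult \<theta> (0, u) p) (a, 0) = (0, 0)"
    using assms by (simp add: lau_mult_zero_Pair_left)
  then have "D (lau_mult \<theta> (lau_mult \<theta> (0, u) p) (a, 0)) = 0" by simp
  then have "R (R (D (0, u)) p) (a, 0) + L (0, u) (R (D p) (a, 0)) + L (0, u) (L p (D (a, 0))) = 0"
    by (simp only: D_mult R.add_left L_R_assoc L_mult)
  then show ?thesis by (simp add: algebra_simps eq_neg_iff_add_eq_0)
qed

lemma D_sandwich_right:
  assumes "\<theta> a = 0"
  shows "R (L (a, 0) (D p)) (0, u) = - R (R (D (a, 0)) p) (0, u) - L (a, 0) (L p (D (0, u)))"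
proof -
  have "lau_mult \<theta> (lau_mult \<theta> (a, 0) p) (0, u) = (0, 0)"
    using assms by (cases p) simp
  then have "D (lau_mult \<theta> (lau_mult \<theta> (a, 0) p) (0, u)) = 0" by simp
  then have "R (R (D (a, 0)) p) (0, u) + R (L (a, 0) (D p)) (0, u) + L (a, 0) (L p (D (0, u))) = 0"
    by (simp only: D_mult R.add_left L_mult)
  then show ?thesis by (simp add: algebra_simps eq_neg_iff_add_eq_0)
qed

lemma separating_space_subset_sandwich_ann:
  assumes "q \<longlonglongrightarrow> 0" and "(\<lambda>k. D (q k)) \<longlonglongrightarrow> z"
  shows "z \<in> sandwich_ann \<theta> L R"
  unfolding sandwich_ann_def
proof (intro CollectI allI impI conjI)
  fix u a assume "\<theta> a = 0"
  show "L (0, u) (R z (a, 0)) = 0"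
    by (rule graph_limit_in_kernel[where T = "\<lambda>y. L (0, u) (R y (a, 0))", OF _ _ D_sandwich_left[OF \<open>\<theta> a = 0\<close>] assms])
      (intro bounded_linear_sub bounded_linear_minus bounded_linear_compose[OF L.bounded_linear_right R.bounded_linear_left]
        bounded_linear_compose[OF R.bounded_linear_left R.bounded_linear_right]
        bounded_linear_compose[OF L.bounded_linear_right L.bounded_linear_left])+
  show "R (L (a, 0) z) (0, u) = 0"
    by (rule graph_limit_in_kernel[where T = "\<lambda>y. R (L (a, 0) y) (0, u)", OF _ _ D_sandwich_right[OF \<open>\<theta> a = 0\<close>] assms])
      (intro bounded_linear_sub bounded_linear_minus bounded_linear_compose[OF R.bounded_linear_left L.bounded_linear_right]
        bounded_linear_compose[OF R.bounded_linear_left R.bounded_linear_right]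
        bounded_linear_compose[OF L.bounded_linear_right L.bounded_linear_left])+
qed

lemma D_kernel_left: "\<theta> c = 0 \<Longrightarrow> L (0, u) (D (c, 0)) = - R (D (0, u)) (c, 0)"
  using D_mult[of "(0, u)" "(c, 0)"] by (simp add: eq_neg_iff_add_eq_0 add.commute)

lemma D_kernel_right: "\<theta> c = 0 \<Longrightarrow> R (D (c, 0)) (0, u) = - L (c, 0) (D (0, u))"
  using D_mult[of "(c, 0)" "(0, u)"] by (simp add: eq_neg_iff_add_eq_0)

lemma D_eq_left_action:
  assumes "ann_U L R = {0}" and "\<theta> e = 1" and R_zero: "\<And>x p. R x p = 0"
  shows "D q = L q (D (e, 0))"
proof -
  have ker: "D (c, 0) = 0" if "\<theta> c = 0" for c
  proof -
    have "L (0, u) (D (c, 0)) = 0" "R (D (c, 0)) (0, u) = 0" for u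
      using D_kernel_left[OF that] R_zero by simp_all
    then show ?thesis using assms(1) unfolding ann_U_def by blast
  qed
  obtain b v where q: "q = (b, v)" by fastforce
  have "D q = D (b - b * e, 0) + D (lau_mult \<theta> q (e, 0))"
    by (simp add: q \<open>\<theta> e = 1\<close> flip: D_add)
  also have "\<dots> = L q (D (e, 0))"
    using ker[of "b - b * e"] by (simp add: D_mult R_zero \<open>\<theta> e = 1\<close>)
  finally show ?thesis .
qed

lemma D_eq_right_action:
  assumes "ann_U L R = {0}" and "\<theta> e = 1" and L_zero: "\<And>p x. L p x = 0"
  shows "D q = R (D (e, 0)) q"
proof -
  have ker: "D (c, 0) = 0" if "\<theta> c = 0" for c
  proof -
    have "L (0, u) (D (c, 0)) = 0" "R (D (c, 0)) (0, u) = 0" for u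
      using D_kernel_right[OF that] L_zero by simp_all
    then show ?thesis using assms(1) unfolding ann_U_def by blast
  qed
  obtain b v where q: "q = (b, v)" by fastforce
  have "D q = D (b - e * b, 0) + D (lau_mult \<theta> (e, 0) q)"
    by (simp add: q \<open>\<theta> e = 1\<close> flip: D_add)
  also have "\<dots> = R (D (e, 0)) q"
    using ker[of "b - e * b"] by (simp add: D_mult L_zero \<open>\<theta> e = 1\<close>)
  finally show ?thesis .
qed

lemma bounded_linear_D_of_one_sided:
  assumes "ann_U L R = {0}" and "\<theta> e = 1" and "(\<forall>x p. R x p = 0) \<or> (\<forall>p x. L p x = 0)"
  shows "bounded_linear D"
  using assms(3)
proof
  assume R_zero: "\<forall>x p. R x p = 0"
  have "(\<lambda>q. L q (D (e, 0))) = D"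
  proof
    show "L q (D (e, 0)) = D q" for q
      by (rule D_eq_left_action[OF assms(1,2), symmetric]) (simp add: R_zero)
  qed
  with L.bounded_linear_left show ?thesis by metis
next
  assume L_zero: "\<forall>p x. L p x = 0"
  have "R (D (e, 0)) = D"
  proof
    show "R (D (e, 0)) q = D q" for q
      by (rule D_eq_right_action[OF assms(1,2), symmetric]) (simp add: L_zero)
  qed
  with R.bounded_linear_right show ?thesis by metis
qed

theorem continuous_on_D:
  assumes "\<theta> \<noteq> (\<lambda>_. 0)" and simple: "simple_bimodule L R"
    and "ann_U L R \<noteq> UNIV" and "center_A L R \<noteq> UNIV"
  shows "continuous_on UNIV D"
proof -
  have ann: "ann_U L R = {0}"
    using simple_bimoduleD[OF simple closed_subbimodule_ann_U] assms(3) by blast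
  obtain e where e: "\<theta> e = 1" using character_obtain_one[OF character assms(1)] .
  have "bounded_linear D"
  proof (cases "sandwich_ann \<theta> L R = {0}")
    case True
    with separating_space_subset_sandwich_ann show ?thesis
      by (intro closed_graph_theorem[OF linear_D]) blast
  next
    case False
    then have "sandwich_ann \<theta> L R = UNIV"
      using simple_bimoduleD[OF simple closed_subbimodule_sandwich_ann] by blast
    then have "\<And>a x. \<theta> a = 0 \<Longrightarrow> L (a, 0) x = 0 \<and> R x (a, 0) = 0"
      using kernel_acts_trivially[OF simple assms(3)] by blast
    from one_sided_action[OF this e simple assms(4)] show ?thesis
      by (rule bounded_linear_D_of_one_sided[OF ann e])
  qed
  then show ?thesis by (rule linear_continuous_on)
qed

end

theorem corollary2p10:
  fixes \<theta> :: "'a::complex_banach_algebra \<Rightarrow> complex"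
    and L :: "'a \<times> 'u::complex_banach_algebra \<Rightarrow> 'x::complex_banach \<Rightarrow> 'x"
    and R :: "'x \<Rightarrow> 'a \<times> 'u \<Rightarrow> 'x"
    and D :: "'a \<times> 'u \<Rightarrow> 'x"
  assumes "character \<theta>" and "\<theta> \<noteq> (\<lambda>_. 0)"
    and "lau_banach_bimodule \<theta> L R"
    and "simple_bimodule L R"
    and "lau_derivation \<theta> L R D"
    and "(ann_U L R \<noteq> UNIV \<and> center_A L R \<noteq> UNIV) \<or>
         (ann_U L R = {0} \<and> center_A L R \<noteq> UNIV)"
  shows "continuous_on UNIV D"
proof -
  interpret lau_bimodule_derivation \<theta> L R D
    using assms(1,3,5) by unfold_locales
  have "center_A L R \<noteq> UNIV" using assms(6) by blast
  moreover have "ann_U L R \<noteq> UNIV"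
  proof
    assume "ann_U L R = UNIV"
    with assms(6) have trivial: "\<And>x::'x. x = 0" by auto
    have "L (a, 0) x = R x (a, 0)" for a x
      using trivial[of "L (a, 0) x"] trivial[of "R x (a, 0)"] by simp
    then have "center_A L R = UNIV" by (simp add: center_A_def)
    with \<open>center_A L R \<noteq> UNIV\<close> show False by simp
  qed
  ultimately show ?thesis using continuous_on_D[OF assms(2,4)] by blast
qed

end
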